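(* There is a function $f'$ with $f'(t,k)=O_t(k^t)$ (i.e., for each fixed $t$ there is $C_t$ with $f'(t,k)\le C_t k^t$ for all $k\ge1$) such that every $\mathcal{O}_k$-free graph $G$ with no $K_{t,t}$ subgraph contains a set $X$ of at most $f'(t,k)$ vertices intersecting every banana of $G$.
   Context: All graphs are finite and simple. Two vertex-disjoint subgraphs are independent if there is no edge between them. A graph $G$ is $\mathcal{O}_k$-free if it does not contain $k$ pairwise vertex-disjoint and pairwise independent cycles; equivalently, $G$ has no induced subgraph isomorphic to a disjoint union of $k$ cycles. A banana in $G$ is a pair of distinct vertices together with at least two internally vertex-disjoint paths between them all of whose internal vertices have degree exactly 2 in $G$; a set $X$ intersects the banana if it contains a vertex of the banana (one of the two vertices or an internal vertex of one of these paths). *)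

theory Defs
  imports Main
begin

definition simple_graph :: "'a set \<Rightarrow> ('a \<Rightarrow> 'a \<Rightarrow> bool) \<Rightarrow> bool" where
  "simple_graph V E \<longleftrightarrow> finite V \<and> (\<forall>x y. E x y \<longrightarrow> x \<in> V \<and> y \<in> V)
     \<and> (\<forall>x y. E x y \<longrightarrow> E y x) \<and> (\<forall>x. \<not> E x x)"

definition degree :: "'a set \<Rightarrow> ('a \<Rightarrow> 'a \<Rightarrow> bool) \<Rightarrow> 'a \<Rightarrow> nat" where
  "degree V E x = card {y \<in> V. E x y}"

definition is_cycle :: "'a set \<Rightarrow> ('a \<Rightarrow> 'a \<Rightarrow> bool) \<Rightarrow> 'a list \<Rightarrow> bool" where
  "is_cycle V E c \<longleftrightarrow> distinct c \<and> length c \<ge> 3 \<and> set c \<subseteq> V \<and>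
     (\<forall>i < length c. E (c ! i) (c ! ((i + 1) mod length c)))"

definition has_Ok :: "'a set \<Rightarrow> ('a \<Rightarrow> 'a \<Rightarrow> bool) \<Rightarrow> nat \<Rightarrow> bool" where
  "has_Ok V E k \<longleftrightarrow> (\<exists>cs :: nat \<Rightarrow> 'a list.
     (\<forall>i < k. is_cycle V E (cs i)) \<and>
     (\<forall>i < k. \<forall>j < k. i \<noteq> j \<longrightarrow>
        set (cs i) \<inter> set (cs j) = {} \<and>
        (\<forall>x \<in> set (cs i). \<forall>y \<in> set (cs j). \<not> E x y)))"

definition Ok_free :: "'a set \<Rightarrow> ('a \<Rightarrow> 'a \<Rightarrow> bool) \<Rightarrow> nat \<Rightarrow> bool" where
  "Ok_free V E k \<longleftrightarrow> \<not> has_Ok V E k"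

definition has_Ktt :: "'a set \<Rightarrow> ('a \<Rightarrow> 'a \<Rightarrow> bool) \<Rightarrow> nat \<Rightarrow> bool" where
  "has_Ktt V E t \<longleftrightarrow> (\<exists>A B. A \<subseteq> V \<and> B \<subseteq> V \<and> A \<inter> B = {} \<and>
     card A = t \<and> card B = t \<and> finite A \<and> finite B \<and> (\<forall>a \<in> A. \<forall>b \<in> B. E a b))"

definition is_path :: "'a set \<Rightarrow> ('a \<Rightarrow> 'a \<Rightarrow> bool) \<Rightarrow> 'a \<Rightarrow> 'a \<Rightarrow> 'a list \<Rightarrow> bool" where
  "is_path V E u v p \<longleftrightarrow> p \<noteq> [] \<and> hd p = u \<and> last p = v \<and> distinct p \<and> set p \<subseteq> V \<and>
     (\<forall>i. i + 1 < length p \<longrightarrow> E (p ! i) (p ! (i + 1)))"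

definition internal :: "'a list \<Rightarrow> 'a set" where
  "internal p = set (butlast (tl p))"

definition banana :: "'a set \<Rightarrow> ('a \<Rightarrow> 'a \<Rightarrow> bool) \<Rightarrow> 'a \<Rightarrow> 'a \<Rightarrow> 'a list set \<Rightarrow> bool" where
  "banana V E u v P \<longleftrightarrow> u \<noteq> v \<and> finite P \<and> card P \<ge> 2 \<and>
     (\<forall>p \<in> P. is_path V E u v p) \<and>
     (\<forall>p \<in> P. \<forall>q \<in> P. p \<noteq> q \<longrightarrow> internal p \<inter> internal q = {}) \<and>
     (\<forall>p \<in> P. \<forall>x \<in> internal p. degree V E x = 2)"

definition banana_vertices :: "'a \<Rightarrow> 'a \<Rightarrow> 'a list set \<Rightarrow> 'a set" where
  "banana_vertices u v P = {u, v} \<union> (\<Union>p \<in> P. internal p)"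

end

theory Submission
  imports Defs Complex_Main
begin

text \<open>Two internally disjoint paths of a banana form a cycle whose only vertices of degree
other than 2 (branch vertices) are the two ends of the banana. Since a cycle through a
degree-2 vertex must use both of its edges, two such cycles whose branch vertices are
disjoint and non-adjacent are themselves disjoint and independent. Take a maximal family M
of pairwise disjoint branch sets of such cycles, and one vertex on every cycle without
branch vertices; these hit every banana. There are fewer than k branchless cycles, as they
are pairwise independent. In a K_{t,t}-free graph a Kovari-Sos-Turan count shows that any
(4t^2+1)^t k^t disjoint sets of at most two vertices contain k pairwise non-adjacent ones,
which would give k independent cycles; hence |M| < (4t^2+1)^t k^t.\<close>

section \<open>Cycles in bananas\<close>

lemma is_path_successively: "is_path V E u v p \<Longrightarrow> successively E p"
  unfolding is_path_def successively_conv_nth by simp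

lemma is_path_split_ends:
  assumes "is_path V E u v p" "u \<noteq> v"
  shows "p = u # butlast (tl p) @ [v]"
proof -
  obtain r where p: "p = u # r" using assms unfolding is_path_def
    by (cases p) auto
  have "r \<noteq> []" "last r = v" using assms p unfolding is_path_def by auto
  then show ?thesis using p by (metis append_butlast_last_id butlast_tl list.sel(3))
qed

lemma is_path_edge_if_short:
  assumes "is_path V E u v p" "u \<noteq> v" "length p < 3"
  shows "p = [u, v]"
proof -
  obtain l where "p = u # l @ [v]" using is_path_split_ends[OF assms(1,2)] by blast
  then show ?thesis using assms(3) by simp
qed

lemma is_cycleI:
  assumes "distinct c" "length c \<ge> 3" "set c \<subseteq> V" "successively E c" "E (last c) (hd c)"
  shows "is_cycle V E c"
  unfolding is_cycle_def
proof (intro conjI allI impI)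
  fix i assume i: "i < length c"
  show "E (c ! i) (c ! ((i + 1) mod length c))"
  proof (cases "i + 1 < length c")
    case True then show ?thesis using assms(4) by (simp add: successively_nth)
  next
    case False
    then have "i = length c - 1" using i by simp
    moreover have "c \<noteq> []" using assms(2) by auto
    ultimately have "c ! i = last c" "c ! ((i + 1) mod length c) = hd c"
      by (simp_all add: last_conv_nth hd_conv_nth)
    then show ?thesis using assms(5) by simp
  qed
qed (use assms in auto)

lemma is_cycle_edge:
  "is_cycle V E c \<Longrightarrow> i < length c \<Longrightarrow> E (c ! i) (c ! ((i + 1) mod length c))"
  unfolding is_cycle_def by blast

lemma cycle_of_two_paths:
  assumes G: "simple_graph V E" and uv: "u \<noteq> v"
    and p: "is_path V E u v p" and q: "is_path V E u v q"
    and disj: "internal p \<inter> internal q = {}" and long: "length p \<ge> 3"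
  shows "\<exists>c. is_cycle V E c \<and> set c = {u, v} \<union> internal p \<union> internal q"
proof -
  define l where "l = butlast (tl p)"
  define m where "m = butlast (tl q)"
  have pe: "p = u # l @ [v]" using is_path_split_ends[OF p uv] l_def by simp
  have qe: "q = u # m @ [v]" using is_path_split_ends[OF q uv] m_def by simp
  have sym: "\<And>x y. E x y \<Longrightarrow> E y x" using G unfolding simple_graph_def by blast
  have internal: "internal p = set l" "internal q = set m"
    unfolding internal_def l_def m_def by auto
  have sp: "successively E p" and sq: "successively E (m @ [v])"
    using is_path_successively[OF p] is_path_successively[OF q] qe
    by (simp_all add: successively_Cons)
  define c where "c = p @ rev m"
  have "distinct c" using p q disj internal unfolding c_def is_path_def by (auto simp: pe qe)
  moreover have "length c \<ge> 3" using long unfolding c_def by simp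
  moreover have "set c \<subseteq> V" using p q unfolding c_def is_path_def by (auto simp: qe)
  moreover have "successively E c"
  proof -
    have "successively E (rev m)"
      using sq by (auto simp: successively_append_iff intro: successively_mono sym)
    moreover have "m \<noteq> [] \<Longrightarrow> E v (last m)" using sq sym by (simp add: successively_append_iff)
    ultimately show ?thesis using sp unfolding c_def
      by (subst successively_append_iff) (auto simp: pe hd_rev)
  qed
  moreover have "E (last c) (hd c)"
  proof (cases "m = []")
    case True
    then show ?thesis using is_path_successively[OF q] qe sym unfolding c_def by (simp add: pe)
  next
    case False
    then have "E u (hd m)" using is_path_successively[OF q] qe by (cases m) auto
    then show ?thesis using False sym unfolding c_def by (simp add: pe last_rev)
  qed
  ultimately have "is_cycle V E c" by (rule is_cycleI)
  moreover have "set c = {u, v} \<union> internal p \<union> internal q"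
    unfolding c_def internal by (auto simp: pe)
  ultimately show ?thesis by blast
qed

definition branch_vertices :: "'a set \<Rightarrow> ('a \<Rightarrow> 'a \<Rightarrow> bool) \<Rightarrow> 'a set" where
  "branch_vertices V E = {x\<in>V. degree V E x \<noteq> 2}"

definition two_branch_cycle :: "'a set \<Rightarrow> ('a \<Rightarrow> 'a \<Rightarrow> bool) \<Rightarrow> 'a list \<Rightarrow> bool" where
  "two_branch_cycle V E c \<longleftrightarrow> is_cycle V E c \<and> card (set c \<inter> branch_vertices V E) \<le> 2"

lemma banana_has_two_branch_cycle:
  assumes G: "simple_graph V E" and b: "banana V E u v P"
  shows "\<exists>c. two_branch_cycle V E c \<and> set c \<subseteq> banana_vertices u v P"
proof -
  have "2 \<le> card P" using b unfolding banana_def by blast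
  then obtain Q where "Q \<subseteq> P" "card Q = 2" by (rule obtain_subset_with_card_n)
  then obtain p q where pq: "p \<in> P" "q \<in> P" "p \<noteq> q" by (auto simp: card_2_iff)
  have uv: "u \<noteq> v" using b unfolding banana_def by blast
  have paths: "is_path V E u v p" "is_path V E u v q"
    and disj: "internal p \<inter> internal q = {}"
    and deg2: "\<forall>x \<in> internal p \<union> internal q. degree V E x = 2"
    using b pq unfolding banana_def by auto
  obtain c where c: "is_cycle V E c" "set c = {u, v} \<union> internal p \<union> internal q"
  proof (cases "length p \<ge> 3")
    case True
    then show ?thesis using cycle_of_two_paths[OF G uv paths disj] that by blast
  next
    case False
    then have "length q \<ge> 3"
      using is_path_edge_if_short[OF paths(1) uv] is_path_edge_if_short[OF paths(2) uv] pq
      by fastforce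
    moreover have "internal q \<inter> internal p = {}" using disj by blast
    ultimately obtain c where "is_cycle V E c" "set c = {u, v} \<union> internal q \<union> internal p"
      using cycle_of_two_paths[OF G uv paths(2,1)] by blast
    then show ?thesis using that by (simp add: Un_ac)
  qed
  have "set c \<inter> branch_vertices V E \<subseteq> {u, v}"
    using c(2) deg2 unfolding branch_vertices_def by auto
  then have "card (set c \<inter> branch_vertices V E) \<le> card {u, v}" by (intro card_mono) auto
  also have "\<dots> \<le> 2" by (simp add: card_insert_if)
  finally have "two_branch_cycle V E c" using c(1) unfolding two_branch_cycle_def by blast
  moreover have "set c \<subseteq> banana_vertices u v P"
    using c(2) pq unfolding banana_vertices_def by auto
  ultimately show ?thesis by blast
qed

section \<open>Cycles through degree-2 vertices\<close>

lemma cycle_contains_neighbour_of_degree_two: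
  assumes G: "simple_graph V E" and c: "is_cycle V E c" and x: "x \<in> set c"
    and deg: "degree V E x = 2" and e: "E x y"
  shows "y \<in> set c"
proof -
  define n where "n = length c"
  have n: "n \<ge> 3" "distinct c" using c unfolding is_cycle_def n_def by auto
  obtain i where i: "i < n" "c ! i = x" using x n_def by (auto simp: in_set_conv_nth)
  have sym: "\<And>x y. E x y \<Longrightarrow> E y x" and fin: "finite V" and inV: "\<And>x y. E x y \<Longrightarrow> y \<in> V"
    using G unfolding simple_graph_def by blast+
  define succ where "succ = (i + 1) mod n"
  define pred where "pred = (if i = 0 then n - 1 else i - 1)"
  have idx: "succ < n" "pred < n" "(pred + 1) mod n = i" "succ \<noteq> pred"
    using n i unfolding succ_def pred_def by (auto simp: mod_if)
  have "E x (c ! succ)" "E x (c ! pred)"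
    using is_cycle_edge[OF c, of i] is_cycle_edge[OF c, of pred] i idx sym
    unfolding n_def succ_def by auto
  then have sub: "{c ! succ, c ! pred} \<subseteq> {z\<in>V. E x z}" using inV by auto
  have "c ! succ \<noteq> c ! pred" using n idx n_def by (simp add: nth_eq_iff_index_eq)
  then have "card {c ! succ, c ! pred} = card {z\<in>V. E x z}"
    using deg unfolding degree_def by simp
  then have "{c ! succ, c ! pred} = {z\<in>V. E x z}"
    using sub fin by (intro card_subset_eq) auto
  then have "y \<in> {c ! succ, c ! pred}" using e inV by auto
  then show ?thesis using idx n_def by auto
qed

text \<open>Walking along c from a common vertex never leaves c', since each step starts at a
degree-2 vertex of c'.\<close>
lemma cycle_subset_if_degree_two:
  assumes G: "simple_graph V E" and c: "is_cycle V E c" and c': "is_cycle V E c'"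
    and deg: "\<forall>x \<in> set c \<inter> set c'. degree V E x = 2"
    and meet: "set c \<inter> set c' \<noteq> {}"
  shows "set c \<subseteq> set c'"
proof -
  define n where "n = length c"
  have n: "n \<ge> 3" using c unfolding is_cycle_def n_def by simp
  obtain i where i: "i < n" "c ! i \<in> set c'" using meet n_def by (metis disjoint_iff in_set_conv_nth)
  have walk: "c ! ((i + j) mod n) \<in> set c'" for j
  proof (induction j)
    case 0 then show ?case using i by simp
  next
    case (Suc j)
    define a where "a = (i + j) mod n"
    have a: "a < n" using n a_def by simp
    then have "degree V E (c ! a) = 2" using deg Suc a_def n_def by simp
    moreover have "E (c ! a) (c ! ((a + 1) mod n))" using is_cycle_edge[OF c] a n_def by simp
    ultimately have "c ! ((a + 1) mod n) \<in> set c'"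
      using cycle_contains_neighbour_of_degree_two[OF G c'] Suc a_def by blast
    moreover have "(a + 1) mod n = (i + Suc j) mod n" unfolding a_def by (simp add: mod_Suc_eq)
    ultimately show ?case by simp
  qed
  show ?thesis
  proof
    fix y assume "y \<in> set c"
    then obtain m where m: "m < n" "c ! m = y" using n_def by (auto simp: in_set_conv_nth)
    then have "(i + (m + n - i)) mod n = m" using i by simp
    then show "y \<in> set c'" using walk[of "m + n - i"] m by simp
  qed
qed

lemma cycles_separated_if_branches_separated:
  assumes G: "simple_graph V E" and c: "is_cycle V E c" and c': "is_cycle V E c'"
    and neq: "set c \<noteq> set c'"
    and disj: "set c \<inter> set c' \<inter> branch_vertices V E = {}"
    and indep: "\<forall>x \<in> set c \<inter> branch_vertices V E. \<forall>y \<in> set c' \<inter> branch_vertices V E. \<not> E x y"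
  shows "set c \<inter> set c' = {} \<and> (\<forall>x\<in>set c. \<forall>y\<in>set c'. \<not> E x y)"
proof -
  have sym: "\<And>x y. E x y \<Longrightarrow> E y x" using G unfolding simple_graph_def by blast
  have V: "set c \<subseteq> V" "set c' \<subseteq> V" using c c' unfolding is_cycle_def by auto
  have deg: "degree V E x = 2" if "x \<in> set c \<union> set c'" "x \<notin> branch_vertices V E" for x
    using that V unfolding branch_vertices_def by auto
  have "set c \<inter> set c' = {}"
  proof (rule ccontr)
    assume meet: "set c \<inter> set c' \<noteq> {}"
    have "set c \<subseteq> set c'" "set c' \<subseteq> set c"
      using cycle_subset_if_degree_two[OF G c c'] cycle_subset_if_degree_two[OF G c' c]
        meet disj deg by blast+
    then show False using neq by blast
  qed
  moreover have "\<not> E x y" if x: "x \<in> set c" and y: "y \<in> set c'" for x y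
  proof
    assume e: "E x y"
    have "x \<in> branch_vertices V E"
      using cycle_contains_neighbour_of_degree_two[OF G c x _ e] deg x y \<open>set c \<inter> set c' = {}\<close>
      by blast
    moreover have "y \<in> branch_vertices V E"
      using cycle_contains_neighbour_of_degree_two[OF G c' y _ sym[OF e]] deg x y
        \<open>set c \<inter> set c' = {}\<close> by blast
    ultimately show False using indep x y e by blast
  qed
  ultimately show ?thesis by blast
qed

lemma has_OkI:
  assumes "finite I" "card I = k" "\<forall>i\<in>I. is_cycle V E (cy i)"
    and "\<forall>i\<in>I. \<forall>j\<in>I. i \<noteq> j \<longrightarrow> set (cy i) \<inter> set (cy j) = {} \<and>
            (\<forall>x \<in> set (cy i). \<forall>y \<in> set (cy j). \<not> E x y)"
  shows "has_Ok V E k"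
proof -
  obtain h where h: "bij_betw h {0..<k} I" using ex_bij_betw_nat_finite[OF assms(1)] assms(2) by blast
  have h_in: "h i \<in> I" if "i < k" for i
    using h that by (auto simp: bij_betw_def)
  have h_inj: "h i \<noteq> h j" if "i < k" "j < k" "i \<noteq> j" for i j
    using h that by (auto simp: bij_betw_def inj_on_def)
  show ?thesis unfolding has_Ok_def using assms(3,4) h_in h_inj
    by (intro exI[of _ "\<lambda>i. cy (h i)"]) blast
qed

lemma has_Ok_if_branches_separated:
  assumes G: "simple_graph V E" and "finite I" "card I = k" "\<forall>i\<in>I. is_cycle V E (cy i)"
    and sep: "\<forall>i\<in>I. \<forall>j\<in>I. i \<noteq> j \<longrightarrow> set (cy i) \<noteq> set (cy j) \<and>
        set (cy i) \<inter> set (cy j) \<inter> branch_vertices V E = {} \<and>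
        (\<forall>x \<in> set (cy i) \<inter> branch_vertices V E. \<forall>y \<in> set (cy j) \<inter> branch_vertices V E. \<not> E x y)"
  shows "has_Ok V E k"
proof (rule has_OkI[OF assms(2-4)], intro ballI impI)
  fix i j assume ij: "i \<in> I" "j \<in> I" "i \<noteq> j"
  then show "set (cy i) \<inter> set (cy j) = {} \<and> (\<forall>x\<in>set (cy i). \<forall>y\<in>set (cy j). \<not> E x y)"
    using sep[rule_format, OF ij] assms(4)
    by (intro cycles_separated_if_branches_separated[OF G]) auto
qed

section \<open>Counting in K_{t,t}-free graphs\<close>

definition nbhd_in :: "'a set \<Rightarrow> ('a \<Rightarrow> 'a \<Rightarrow> bool) \<Rightarrow> 'a \<Rightarrow> 'a set" where
  "nbhd_in W E v = {y\<in>W. E v y}"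

lemma card_common_nbhd_lt:
  assumes G: "simple_graph V E" and nK: "\<not> has_Ktt V E t" and W: "W \<subseteq> V"
    and T: "T \<subseteq> W" "card T = t"
  shows "card {v\<in>W. T \<subseteq> nbhd_in W E v} < t"
proof (rule ccontr)
  assume "\<not> ?thesis"
  then have "t \<le> card {v\<in>W. T \<subseteq> nbhd_in W E v}" by simp
  then obtain B where B: "B \<subseteq> {v\<in>W. T \<subseteq> nbhd_in W E v}" "card B = t" "finite B"
    by (rule obtain_subset_with_card_n)
  have sym: "\<And>x y. E x y \<Longrightarrow> E y x" and irrefl: "\<And>x. \<not> E x x" and "finite V"
    using G unfolding simple_graph_def by blast+
  have "finite T" using finite_subset[OF subset_trans[OF T(1) W] \<open>finite V\<close>] .
  moreover have "T \<inter> B = {}" "\<forall>a\<in>T. \<forall>b\<in>B. E a b"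
    using B irrefl sym unfolding nbhd_in_def by blast+
  ultimately have "has_Ktt V E t" unfolding has_Ktt_def
    using T W B by (intro exI[of _ T] exI[of _ B]) auto
  then show False using nK by simp
qed

text \<open>Double counting of pairs (v, T) with T a t-set of neighbours of v.\<close>
lemma sum_card_nbhd_choose_le:
  assumes G: "simple_graph V E" and nK: "\<not> has_Ktt V E t" and W: "W \<subseteq> V"
  shows "(\<Sum>v\<in>W. card (nbhd_in W E v) choose t) \<le> (t - 1) * (card W choose t)"
proof -
  have fW: "finite W" using G W unfolding simple_graph_def by (blast intro: finite_subset)
  define Ts where "Ts = {T. T \<subseteq> W \<and> card T = t}"
  have fTs: "finite Ts" unfolding Ts_def using fW by simp
  have "card (nbhd_in W E v) choose t = card {T\<in>Ts. T \<subseteq> nbhd_in W E v}" for v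
  proof -
    have sub: "nbhd_in W E v \<subseteq> W" unfolding nbhd_in_def by auto
    then have "{T\<in>Ts. T \<subseteq> nbhd_in W E v} = {T. T \<subseteq> nbhd_in W E v \<and> card T = t}"
      unfolding Ts_def by blast
    then show ?thesis using n_subsets[OF finite_subset[OF sub fW]] by simp
  qed
  then have "(\<Sum>v\<in>W. card (nbhd_in W E v) choose t) = (\<Sum>v\<in>W. \<Sum>T\<in>{T\<in>Ts. T \<subseteq> nbhd_in W E v}. 1)"
    by simp
  also have "\<dots> = (\<Sum>T\<in>Ts. \<Sum>v\<in>{v\<in>W. T \<subseteq> nbhd_in W E v}. 1)"
    using sum.swap_restrict[OF fW fTs, of "\<lambda>v T. 1::nat" "\<lambda>v T. T \<subseteq> nbhd_in W E v"] by simp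
  also have "\<dots> \<le> (\<Sum>T\<in>Ts. t - 1)"
  proof (rule sum_mono)
    fix T assume "T \<in> Ts"
    then have "card {v\<in>W. T \<subseteq> nbhd_in W E v} < t"
      using card_common_nbhd_lt[OF G nK W] unfolding Ts_def by blast
    then show "(\<Sum>v\<in>{v\<in>W. T \<subseteq> nbhd_in W E v}. 1) \<le> t - 1" by simp
  qed
  also have "\<dots> = (t - 1) * (card W choose t)" unfolding Ts_def using n_subsets[OF fW] by simp
  finally show ?thesis .
qed

lemma pow_le_choose:
  fixes D t :: nat
  assumes "t \<le> D"
  shows "D ^ t \<le> t ^ t * (D choose t)"
proof -
  have "(real D / real t) ^ t \<le> real (D choose t)"
    using binomial_ge_n_over_k_pow_k[OF assms] by simp
  moreover have "real t ^ t > 0" by (cases "t = 0") simp_all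
  ultimately have "real D ^ t \<le> real t ^ t * real (D choose t)"
    by (simp add: power_divide divide_le_eq mult.commute)
  then have "real (D ^ t) \<le> real (t ^ t * (D choose t))" by simp
  then show ?thesis by (simp only: of_nat_le_iff)
qed

lemma card_high_degree_le:
  assumes G: "simple_graph V E" and nK: "\<not> has_Ktt V E t" and W: "W \<subseteq> V" and D: "t \<le> D"
  shows "card {v\<in>W. D \<le> card (nbhd_in W E v)} * D ^ t \<le> t ^ t * (t - 1) * card W ^ t"
proof -
  have fW: "finite W" using G W unfolding simple_graph_def by (blast intro: finite_subset)
  define H where "H = {v\<in>W. D \<le> card (nbhd_in W E v)}"
  have "card H * (D choose t) = (\<Sum>v\<in>H. D choose t)" by simp
  also have "\<dots> \<le> (\<Sum>v\<in>H. card (nbhd_in W E v) choose t)"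
    by (rule sum_mono) (simp add: H_def binomial_right_mono)
  also have "\<dots> \<le> (\<Sum>v\<in>W. card (nbhd_in W E v) choose t)"
    by (rule sum_mono2) (use fW H_def in auto)
  also have "\<dots> \<le> (t - 1) * (card W choose t)" by (rule sum_card_nbhd_choose_le[OF G nK W])
  also have "\<dots> \<le> (t - 1) * card W ^ t"
    by (cases "t \<le> card W") (simp_all add: binomial_le_pow binomial_eq_0)
  finally have few: "card H * (D choose t) \<le> (t - 1) * card W ^ t" .
  have "card H * D ^ t \<le> card H * (t ^ t * (D choose t))"
    using pow_le_choose[OF D] by (rule mult_le_mono2)
  also have "\<dots> = t ^ t * (card H * (D choose t))" by (simp add: ac_simps)
  also have "\<dots> \<le> t ^ t * ((t - 1) * card W ^ t)" using few by (rule mult_le_mono2)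
  finally show ?thesis unfolding H_def by (simp add: mult.assoc)
qed

lemma heavy_bound_lt:
  fixes t Y :: nat
  assumes t: "t \<ge> 1" and Y: "Y \<ge> 1"
  shows "t ^ t * (t - 1) * (2 * Y ^ t) ^ t < Y ^ t * (2 * t ^ 2 * Y ^ (t - 1)) ^ t"
proof -
  have tt: "t + (t - 1) * t = t * t" using t by (cases t) auto
  have "(2 * Y ^ t) ^ t = 2 ^ t * Y ^ (t * t)" by (simp add: power_mult_distrib power_mult)
  then have "t ^ t * (t - 1) * (2 * Y ^ t) ^ t = (2 ^ t * t ^ t * (t - 1)) * Y ^ (t * t)"
    by (simp only: mult_ac)
  also have "\<dots> < (2 ^ t * t ^ t * t ^ t) * Y ^ (t * t)"
    using t Y self_le_power[of t t] by (intro mult_strict_right_mono mult_strict_left_mono) auto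
  also have "\<dots> = Y ^ t * (2 * t ^ 2 * Y ^ (t - 1)) ^ t"
    by (simp add: power_mult_distrib power2_eq_square power_mult[symmetric]
        power_add[symmetric] tt algebra_simps)
  finally show ?thesis .
qed

lemma pow_add_pow_pred_le:
  fixes t k :: nat
  assumes t: "t \<ge> 1"
  shows "k ^ t + Suc k ^ (t - 1) \<le> Suc k ^ t"
proof -
  have "k ^ t = k * k ^ (t - 1)" using t by (cases t) auto
  also have "\<dots> \<le> k * Suc k ^ (t - 1)" by (simp add: power_mono)
  finally have "k ^ t + Suc k ^ (t - 1) \<le> Suc k * Suc k ^ (t - 1)" by simp
  also have "\<dots> = Suc k ^ t" using t by (cases t) auto
  finally show ?thesis .
qed

lemma greedy_step_bound:
  fixes t k :: nat
  assumes t: "t \<ge> 1"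
  shows "1 + 2 * (2 * t ^ 2 * ((4 * t ^ 2 + 1) * Suc k) ^ (t - 1)) + (4 * t ^ 2 + 1) ^ t * k ^ t
         \<le> (4 * t ^ 2 + 1) ^ t * Suc k ^ t"
proof -
  define X where "X = 4 * t ^ 2 + 1"
  define Z where "Z = (X * Suc k) ^ (t - 1)"
  have "X ^ t * Suc k ^ (t - 1) = X * Z"
    using t unfolding Z_def power_mult_distrib by (cases t) simp_all
  also have "\<dots> = 2 * (2 * t ^ 2 * Z) + Z" unfolding X_def by (simp add: algebra_simps)
  finally have "X ^ t * Suc k ^ (t - 1) = 2 * (2 * t ^ 2 * Z) + Z" .
  moreover have "X ^ t * k ^ t + X ^ t * Suc k ^ (t - 1) \<le> X ^ t * Suc k ^ t"
    using mult_le_mono2[OF pow_add_pow_pred_le[OF t, of k], of "X ^ t"]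
    by (simp add: add_mult_distrib2)
  moreover have "Z \<ge> 1" unfolding Z_def X_def by simp
  ultimately show ?thesis unfolding X_def Z_def by linarith
qed

section \<open>Independent blocks\<close>

definition block_family :: "'a set \<Rightarrow> 'a set set \<Rightarrow> bool" where
  "block_family V M \<longleftrightarrow> finite M \<and> pairwise disjnt M \<and> (\<forall>b\<in>M. b \<subseteq> V \<and> b \<noteq> {} \<and> card b \<le> 2)"

definition blocks_adjacent :: "('a \<Rightarrow> 'a \<Rightarrow> bool) \<Rightarrow> 'a set \<Rightarrow> 'a set \<Rightarrow> bool" where
  "blocks_adjacent E a b \<longleftrightarrow> (\<exists>x\<in>a. \<exists>y\<in>b. E x y)"

lemma block_family_subset: "block_family V M \<Longrightarrow> M' \<subseteq> M \<Longrightarrow> block_family V M'"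
  unfolding block_family_def by (auto intro: finite_subset pairwise_subset)

lemma inj_on_pairwise_disjnt_choice:
  assumes disj: "pairwise disjnt M" and f: "\<forall>b\<in>M. f b \<in> b"
  shows "inj_on f M"
proof (rule inj_onI)
  fix a b assume ab: "a \<in> M" "b \<in> M" "f a = f b"
  then have "f a \<in> a \<inter> b" using f by auto
  then show "a = b" using disj ab(1,2) unfolding pairwise_def disjnt_def by blast
qed

lemma pairwise_disjnt_member_avoids:
  assumes disj: "pairwise disjnt M" and H: "finite H" "card H < card M"
  shows "\<exists>e\<in>M. e \<inter> H = {}"
proof (rule ccontr)
  assume "\<not> ?thesis"
  then have "\<forall>b\<in>M. \<exists>v. v \<in> b \<inter> H" by blast
  then obtain f where f: "\<forall>b\<in>M. f b \<in> b \<inter> H" by (metis bchoice)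
  then have "inj_on f M" using inj_on_pairwise_disjnt_choice[OF disj] by blast
  then have "card M \<le> card H" using f H(1) by (intro card_inj_on_le) auto
  then show False using H(2) by simp
qed

lemma card_adjacent_blocks_le:
  assumes disj: "pairwise disjnt M" and W: "\<Union>M \<subseteq> W" "finite W" and e: "finite e"
  shows "card {b\<in>M. blocks_adjacent E e b} \<le> (\<Sum>x\<in>e. card (nbhd_in W E x))"
proof -
  have "\<forall>b\<in>{b\<in>M. blocks_adjacent E e b}. \<exists>y. y \<in> b \<and> (\<exists>x\<in>e. E x y)"
    unfolding blocks_adjacent_def by blast
  then obtain g where g: "\<forall>b\<in>{b\<in>M. blocks_adjacent E e b}. g b \<in> b \<and> (\<exists>x\<in>e. E x (g b))"
    by (metis bchoice)
  moreover have "pairwise disjnt {b\<in>M. blocks_adjacent E e b}"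
    using disj by (rule pairwise_subset) blast
  ultimately have "inj_on g {b\<in>M. blocks_adjacent E e b}"
    using inj_on_pairwise_disjnt_choice by blast
  moreover have "g ` {b\<in>M. blocks_adjacent E e b} \<subseteq> (\<Union>x\<in>e. nbhd_in W E x)"
    using g W unfolding nbhd_in_def by blast
  moreover have "finite (\<Union>x\<in>e. nbhd_in W E x)" using e W unfolding nbhd_in_def by auto
  ultimately have "card {b\<in>M. blocks_adjacent E e b} \<le> card (\<Union>x\<in>e. nbhd_in W E x)"
    by (rule card_inj_on_le)
  also have "\<dots> \<le> (\<Sum>x\<in>e. card (nbhd_in W E x))" by (rule card_UN_le[OF e])
  finally show ?thesis .
qed

text \<open>Fewer than |M| vertices of W = \<Union>M have at least 2t^2 Y^(t-1) neighbours in W,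
so some block avoids all of them, and such a block meets few other blocks.\<close>
lemma block_family_has_sparse_block:
  assumes G: "simple_graph V E" and nK: "\<not> has_Ktt V E t" and t: "t \<ge> 1"
    and M: "block_family V M" "card M = Y ^ t" and Y: "Y \<ge> 1"
  shows "\<exists>e\<in>M. card {b\<in>M. blocks_adjacent E e b} \<le> 2 * (2 * t ^ 2 * Y ^ (t - 1))"
proof -
  have disj: "pairwise disjnt M" and blocks: "\<forall>b\<in>M. b \<subseteq> V \<and> b \<noteq> {} \<and> card b \<le> 2"
    using M unfolding block_family_def by auto
  define W where "W = \<Union>M"
  define D where "D = 2 * t ^ 2 * Y ^ (t - 1)"
  define H where "H = {v\<in>W. D \<le> card (nbhd_in W E v)}"
  have WV: "W \<subseteq> V" using blocks unfolding W_def by auto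
  have fW: "finite W" using G WV finite_subset unfolding simple_graph_def by blast
  have "card W \<le> (\<Sum>b\<in>M. card b)" unfolding W_def by (rule card_Union_le_sum_card)
  also have "\<dots> \<le> 2 * card M" using blocks sum_mono[of M card "\<lambda>_. 2"] by simp
  finally have cW: "card W \<le> 2 * card M" .
  have "t \<le> 2 * t ^ 2 * 1" using t by (simp add: power2_eq_square)
  also have "\<dots> \<le> D" unfolding D_def using Y by (intro mult_le_mono2) simp
  finally have "t \<le> D" .
  then have "card H * D ^ t \<le> t ^ t * (t - 1) * card W ^ t"
    unfolding H_def by (rule card_high_degree_le[OF G nK WV])
  also have "\<dots> \<le> t ^ t * (t - 1) * (2 * Y ^ t) ^ t"
    using cW M(2) by (intro mult_le_mono2 power_mono) simp_all
  also have "\<dots> < card M * D ^ t" using heavy_bound_lt[OF t Y] M(2) unfolding D_def by simp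
  finally have "card H < card M" by simp
  moreover have "finite H" using fW unfolding H_def by simp
  ultimately obtain e where e: "e \<in> M" "e \<inter> H = {}"
    using pairwise_disjnt_member_avoids[OF disj] by blast
  have eW: "e \<subseteq> W" using e unfolding W_def by blast
  then have "card {b\<in>M. blocks_adjacent E e b} \<le> (\<Sum>x\<in>e. card (nbhd_in W E x))"
    using card_adjacent_blocks_le[OF disj _ fW] finite_subset[OF eW fW] unfolding W_def by blast
  also have "\<dots> \<le> card e * D"
    using e eW sum_mono[of e "\<lambda>x. card (nbhd_in W E x)" "\<lambda>_. D"] unfolding H_def by fastforce
  also have "\<dots> \<le> 2 * D" using blocks e by simp
  finally show ?thesis using e unfolding D_def by blast
qed

text \<open>Greedy choice: a sparse block is kept and its neighbouring blocks are discarded.\<close>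
lemma block_family_has_independent_subfamily:
  assumes G: "simple_graph V E" and nK: "\<not> has_Ktt V E t" and t: "t \<ge> 1"
  shows "block_family V M \<Longrightarrow> (4 * t ^ 2 + 1) ^ t * k ^ t \<le> card M \<Longrightarrow>
    \<exists>S\<subseteq>M. card S = k \<and> pairwise (\<lambda>a b. \<not> blocks_adjacent E a b) S"
proof (induction k arbitrary: M)
  case 0 then show ?case by (intro exI[of _ "{}"]) auto
next
  case (Suc k)
  define Y where "Y = (4 * t ^ 2 + 1) * Suc k"
  have Yt: "Y ^ t = (4 * t ^ 2 + 1) ^ t * Suc k ^ t" unfolding Y_def by (simp only: power_mult_distrib)
  then have "Y ^ t \<le> card M" using Suc.prems(2) by simp
  then obtain M0 where M0: "M0 \<subseteq> M" "card M0 = Y ^ t" "finite M0"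
    by (rule obtain_subset_with_card_n)
  have bf0: "block_family V M0" using block_family_subset[OF Suc.prems(1) M0(1)] .
  obtain e where e: "e \<in> M0"
    and cN: "card {b\<in>M0. blocks_adjacent E e b} \<le> 2 * (2 * t ^ 2 * Y ^ (t - 1))"
    using block_family_has_sparse_block[OF G nK t bf0 M0(2)] unfolding Y_def by auto
  define N where "N = insert e {b\<in>M0. blocks_adjacent E e b}"
  have N: "N \<subseteq> M0" "finite N" using e M0(3) unfolding N_def by auto
  have "card N \<le> Suc (card {b\<in>M0. blocks_adjacent E e b})"
    using M0(3) unfolding N_def by (simp add: card_insert_if)
  moreover have "card (M0 - N) = Y ^ t - card N" using card_Diff_subset[OF N(2,1)] M0(2) by simp
  ultimately have "(4 * t ^ 2 + 1) ^ t * k ^ t \<le> card (M0 - N)"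
    using cN Yt greedy_step_bound[OF t, of k] unfolding Y_def by linarith
  then obtain S where S: "S \<subseteq> M0 - N" "card S = k" "pairwise (\<lambda>a b. \<not> blocks_adjacent E a b) S"
    using Suc.IH block_family_subset[OF bf0, of "M0 - N"] by blast
  have sym: "\<And>x y. E x y \<Longrightarrow> E y x" using G unfolding simple_graph_def by blast
  have "\<forall>b\<in>S. \<not> blocks_adjacent E e b \<and> \<not> blocks_adjacent E b e"
    using S(1) sym unfolding N_def blocks_adjacent_def by blast
  moreover have "e \<notin> S" "finite S" using S(1) M0(3) finite_subset unfolding N_def by auto
  ultimately have "insert e S \<subseteq> M" "card (insert e S) = Suc k"
    "pairwise (\<lambda>a b. \<not> blocks_adjacent E a b) (insert e S)"
    using S M0(1) e by (auto simp: pairwise_insert)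
  then show ?case by blast
qed

section \<open>Hitting all bananas\<close>

lemma disjoint_subfamily_meeting_all:
  assumes "finite F" "{} \<notin> F"
  shows "\<exists>M\<subseteq>F. pairwise disjnt M \<and> (\<forall>K\<in>F. K \<inter> \<Union>M \<noteq> {})"
proof -
  define Fam where "Fam = {M. M \<subseteq> F \<and> pairwise disjnt M}"
  have "finite Fam" "Fam \<noteq> {}" unfolding Fam_def using assms(1) by auto
  then obtain M where M: "M \<in> Fam" and max: "\<forall>M'\<in>Fam. M \<subseteq> M' \<longrightarrow> M = M'"
    using finite_has_maximal[of Fam] by blast
  have "K \<inter> \<Union>M \<noteq> {}" if K: "K \<in> F" for K
  proof
    assume miss: "K \<inter> \<Union>M = {}"
    then have "insert K M \<in> Fam" using K M unfolding Fam_def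
      by (auto simp: pairwise_insert disjnt_def)
    then have "M = insert K M" using max by (simp add: subset_insertI)
    then have "K \<subseteq> \<Union>M" by (metis Union_upper insertI1)
    then show False using Int_absorb2 miss K assms(2) by metis
  qed
  then show ?thesis using M unfolding Fam_def by blast
qed

lemma card_branchless_cycles_lt:
  assumes G: "simple_graph V E" and Ok: "Ok_free V E k"
  shows "card {set c | c. is_cycle V E c \<and> set c \<inter> branch_vertices V E = {}} < k"
    (is "card ?C < k")
proof (rule ccontr)
  assume "\<not> ?thesis"
  then have "k \<le> card ?C" by simp
  then obtain S where S: "S \<subseteq> ?C" "card S = k" "finite S" by (rule obtain_subset_with_card_n)
  then have "\<forall>Y\<in>S. \<exists>c. is_cycle V E c \<and> set c \<inter> branch_vertices V E = {} \<and> set c = Y" by blast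
  then obtain cy where "\<forall>Y\<in>S. is_cycle V E (cy Y) \<and> set (cy Y) \<inter> branch_vertices V E = {} \<and> set (cy Y) = Y"
    by (metis bchoice)
  then have "has_Ok V E k" by (intro has_Ok_if_branches_separated[OF G S(3,2)]) auto
  then show False using Ok unfolding Ok_free_def by simp
qed

lemma card_disjoint_branch_sets_lt:
  assumes G: "simple_graph V E" and Ok: "Ok_free V E k" and nK: "\<not> has_Ktt V E t" and t: "t \<ge> 1"
    and M: "M \<subseteq> {set c \<inter> branch_vertices V E | c.
                   two_branch_cycle V E c \<and> set c \<inter> branch_vertices V E \<noteq> {}}"
    and disj: "pairwise disjnt M"
  shows "card M < (4 * t ^ 2 + 1) ^ t * k ^ t"
proof (rule ccontr)
  assume "\<not> ?thesis"
  then have many: "(4 * t ^ 2 + 1) ^ t * k ^ t \<le> card M" by simp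
  have "M \<subseteq> Pow V" using M unfolding two_branch_cycle_def branch_vertices_def by blast
  moreover have "finite (Pow V)" using G unfolding simple_graph_def by simp
  ultimately have "finite M" by (rule finite_subset)
  then have "block_family V M"
    using M disj unfolding block_family_def two_branch_cycle_def branch_vertices_def by blast
  then obtain S where S: "S \<subseteq> M" "card S = k" "pairwise (\<lambda>a b. \<not> blocks_adjacent E a b) S"
    using block_family_has_independent_subfamily[OF G nK t _ many] by blast
  have "\<forall>K\<in>S. \<exists>c. two_branch_cycle V E c \<and> set c \<inter> branch_vertices V E = K" using S(1) M by blast
  then obtain cy where cy: "\<forall>K\<in>S. two_branch_cycle V E (cy K) \<and> set (cy K) \<inter> branch_vertices V E = K"
    by (metis bchoice)
  have "has_Ok V E k"
  proof (rule has_Ok_if_branches_separated[OF G _ S(2)])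
    show "finite S" using S(1) \<open>finite M\<close> by (rule finite_subset)
    show "\<forall>K\<in>S. is_cycle V E (cy K)" using cy unfolding two_branch_cycle_def by blast
    show "\<forall>i\<in>S. \<forall>j\<in>S. i \<noteq> j \<longrightarrow> set (cy i) \<noteq> set (cy j) \<and>
        set (cy i) \<inter> set (cy j) \<inter> branch_vertices V E = {} \<and>
        (\<forall>x \<in> set (cy i) \<inter> branch_vertices V E. \<forall>y \<in> set (cy j) \<inter> branch_vertices V E. \<not> E x y)"
    proof (intro ballI impI)
      fix i j assume ij: "i \<in> S" "j \<in> S" "i \<noteq> j"
      then have branch: "set (cy i) \<inter> branch_vertices V E = i" "set (cy j) \<inter> branch_vertices V E = j"
        using cy by blast+
      have "set (cy i) \<noteq> set (cy j)" using branch ij(3) by metis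
      moreover have "set (cy i) \<inter> set (cy j) \<inter> branch_vertices V E = i \<inter> j"
        using branch by blast
      moreover have "disjnt i j" using disj S(1) ij unfolding pairwise_def by blast
      moreover have "\<not> blocks_adjacent E i j" using S(3) ij unfolding pairwise_def by blast
      ultimately show "set (cy i) \<noteq> set (cy j) \<and>
        set (cy i) \<inter> set (cy j) \<inter> branch_vertices V E = {} \<and>
        (\<forall>x \<in> set (cy i) \<inter> branch_vertices V E. \<forall>y \<in> set (cy j) \<inter> branch_vertices V E. \<not> E x y)"
        unfolding branch disjnt_def blocks_adjacent_def by simp
    qed
  qed
  then show False using Ok unfolding Ok_free_def by simp
qed

lemma banana_hitting_set:
  assumes G: "simple_graph V E" and Ok: "Ok_free V E k" and nK: "\<not> has_Ktt V E t"
  shows "\<exists>X\<subseteq>V. card X \<le> (2 * (4 * t ^ 2 + 1) ^ t + 1) * k ^ t \<and>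
           (\<forall>u v P. banana V E u v P \<longrightarrow> X \<inter> banana_vertices u v P \<noteq> {})"
proof -
  have "has_Ktt V E 0" unfolding has_Ktt_def by (intro exI[of _ "{}"]) simp
  then have t: "t \<ge> 1" using nK by (cases t) auto
  have "has_Ok V E 0" unfolding has_Ok_def by simp
  then have k: "k \<ge> 1" using Ok unfolding Ok_free_def by (cases k) auto
  define B where "B = branch_vertices V E"
  define F where "F = {set c \<inter> B | c. two_branch_cycle V E c \<and> set c \<inter> B \<noteq> {}}"
  define C where "C = {set c | c. is_cycle V E c \<and> set c \<inter> B = {}}"
  have cycles_in_V: "set c \<subseteq> V" if "is_cycle V E c" for c using that unfolding is_cycle_def by simp
  have "finite (Pow V)" using G unfolding simple_graph_def by simp
  moreover have "F \<subseteq> Pow V" "C \<subseteq> Pow V"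
    using cycles_in_V unfolding F_def C_def two_branch_cycle_def by auto
  ultimately have "finite F" "finite C" by (auto intro: finite_subset)
  obtain M where M: "M \<subseteq> F" "pairwise disjnt M" and hitF: "\<forall>K\<in>F. K \<inter> \<Union>M \<noteq> {}"
    using disjoint_subfamily_meeting_all[OF \<open>finite F\<close>] unfolding F_def by blast
  have "\<forall>Y\<in>C. \<exists>x. x \<in> Y" unfolding C_def is_cycle_def by auto
  then obtain pick where pick: "\<forall>Y\<in>C. pick Y \<in> Y" by (metis bchoice)
  define X where "X = \<Union>M \<union> pick ` C"
  have "X \<subseteq> V" using M(1) pick cycles_in_V unfolding X_def F_def C_def two_branch_cycle_def by blast
  moreover have "card X \<le> (2 * (4 * t ^ 2 + 1) ^ t + 1) * k ^ t"
  proof -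
    have "card (\<Union>M) \<le> (\<Sum>K\<in>M. card K)" by (rule card_Union_le_sum_card)
    also have "\<dots> \<le> (\<Sum>K\<in>M. 2)"
      using M(1) unfolding F_def B_def two_branch_cycle_def by (intro sum_mono) auto
    also have "\<dots> < 2 * ((4 * t ^ 2 + 1) ^ t * k ^ t)"
      using card_disjoint_branch_sets_lt[OF G Ok nK t _ M(2)] M(1) unfolding F_def B_def by simp
    finally have "card (\<Union>M) < 2 * ((4 * t ^ 2 + 1) ^ t * k ^ t)" .
    moreover have "card (pick ` C) < k ^ t"
      using card_image_le[OF \<open>finite C\<close>, of pick] card_branchless_cycles_lt[OF G Ok]
        self_le_power[of k t] k t unfolding C_def B_def by linarith
    ultimately show ?thesis using card_Un_le[of "\<Union>M" "pick ` C"] unfolding X_def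
      by (simp add: algebra_simps)
  qed
  moreover have "X \<inter> banana_vertices u v P \<noteq> {}" if b: "banana V E u v P" for u v P
  proof -
    obtain c where c: "two_branch_cycle V E c" "set c \<subseteq> banana_vertices u v P"
      using banana_has_two_branch_cycle[OF G b] by blast
    show ?thesis
    proof (cases "set c \<inter> B = {}")
      case True
      then have "set c \<in> C" using c(1) unfolding C_def two_branch_cycle_def by blast
      then show ?thesis using pick c(2) unfolding X_def by blast
    next
      case False
      then have "set c \<inter> B \<in> F" using c(1) unfolding F_def by (intro CollectI exI[of _ c]) simp
      then have "set c \<inter> B \<inter> \<Union>M \<noteq> {}" by (rule hitF[rule_format])
      then obtain x where "x \<in> set c" "x \<in> \<Union>M" by blast
      then show ?thesis using c(2) unfolding X_def by blast
    qed
  qed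
  ultimately show ?thesis by blast
qed

theorem mainTheorem8:
  shows "\<exists>f :: nat \<Rightarrow> nat \<Rightarrow> nat.
    (\<forall>t. \<exists>C :: nat. \<forall>k \<ge> 1. f t k \<le> C * k ^ t) \<and>
    (\<forall>t k (V :: nat set) E. simple_graph V E \<and> Ok_free V E k \<and> \<not> has_Ktt V E t \<longrightarrow>
       (\<exists>X \<subseteq> V. card X \<le> f t k \<and>
          (\<forall>u v P. banana V E u v P \<longrightarrow> X \<inter> banana_vertices u v P \<noteq> {})))"
proof (intro exI[of _ "\<lambda>t k. (2 * (4 * t ^ 2 + 1) ^ t + 1) * k ^ t"] conjI allI impI)
  show "\<exists>C. \<forall>k\<ge>1. (2 * (4 * t ^ 2 + 1) ^ t + 1) * k ^ t \<le> C * k ^ t" for t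
    by blast
  show "\<exists>X\<subseteq>V. card X \<le> (2 * (4 * t ^ 2 + 1) ^ t + 1) * k ^ t \<and>
          (\<forall>u v P. banana V E u v P \<longrightarrow> X \<inter> banana_vertices u v P \<noteq> {})"
    if "simple_graph V E \<and> Ok_free V E k \<and> \<not> has_Ktt V E t" for t k and V :: "nat set" and E
    using that by (intro banana_hitting_set) simp_all
qed

end
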